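(* Let $\mathfrak g$ be a finite-dimensional complex simple Lie algebra, $\lambda\in P^+$, and $\boldsymbol\lambda=(\lambda_1,\lambda_2)$, $\boldsymbol\mu=(\mu_1,\mu_2)\in P^+(\lambda,2)$. Then the following are equivalent: (a) $\boldsymbol\lambda\preceq\boldsymbol\mu$; (b) $(\lambda_1-\mu_1)(h_\alpha)\,(\mu_1-\lambda_2)(h_\alpha)\ge0$ for all $\alpha\in R^+$; (c) $(\lambda_1-\mu_1)(h_\alpha)\,(\mu_1-\lambda_2)(h_\alpha)\ge0$ for all $\alpha\in R$. Moreover, if $w\in W$ is such that $w(\lambda_1-\lambda_2)\in P^+$, then $\boldsymbol\lambda\preceq\boldsymbol\mu$ if and only if both $w(\lambda_1-\mu_1)\in P^+$ and $w(\mu_1-\lambda_2)\in P^+$.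
   Context: $\mathfrak g$ has Cartan subalgebra $\mathfrak h$, roots $R$, positive roots $R^+$, coroots $h_\alpha$ for $\alpha\in R^+$ with $h_{-\alpha}=-h_\alpha$, Weyl group $W$ (acting on weights), $P^+$ the dominant integral weights. $P^+(\lambda,2)=\{(\lambda_1,\lambda_2)\in(P^+)^2:\lambda_1+\lambda_2=\lambda\}$, and $(\lambda_1,\lambda_2)\preceq(\mu_1,\mu_2)$ means $\min\{\lambda_1(h_\alpha),\lambda_2(h_\alpha)\}\le\min\{\mu_1(h_\alpha),\mu_2(h_\alpha)\}$ for all $\alpha\in R^+$. *)

theory Defs
  imports "HOL-Analysis.Analysis"
begin

text \<open>The root datum of a finite-dimensional complex simple Lie algebra is modelled by
  an irreducible reduced crystallographic root system R in a Euclidean space E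
  (the real span of the roots in the dual of the Cartan subalgebra).
  For a weight lam and a root alpha, lam(h_alpha) = 2 (lam, alpha) / (alpha, alpha).\<close>

definition coroot_eval :: "'a::real_inner \<Rightarrow> 'a \<Rightarrow> real" where
  "coroot_eval lam \<alpha> = 2 * (lam \<bullet> \<alpha>) / (\<alpha> \<bullet> \<alpha>)"

definition reflection :: "'a::real_inner \<Rightarrow> 'a \<Rightarrow> 'a" where
  "reflection \<alpha> v = v - coroot_eval v \<alpha> *\<^sub>R \<alpha>"

definition root_system :: "'a::euclidean_space set \<Rightarrow> bool" where
  "root_system R \<longleftrightarrow>
     finite R \<and> 0 \<notin> R \<and> span R = UNIV \<and>
     (\<forall>\<alpha>\<in>R. \<forall>\<beta>\<in>R. reflection \<alpha> \<beta> \<in> R) \<and>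
     (\<forall>\<alpha>\<in>R. \<forall>\<beta>\<in>R. coroot_eval \<beta> \<alpha> \<in> \<int>) \<and>
     (\<forall>\<alpha>\<in>R. \<forall>c::real. c *\<^sub>R \<alpha> \<in> R \<longrightarrow> c = 1 \<or> c = -1)"

definition irreducible_rs :: "'a::euclidean_space set \<Rightarrow> bool" where
  "irreducible_rs R \<longleftrightarrow>
     \<not> (\<exists>R1 R2. R1 \<noteq> {} \<and> R2 \<noteq> {} \<and> R1 \<union> R2 = R \<and> R1 \<inter> R2 = {} \<and>
              (\<forall>\<alpha>\<in>R1. \<forall>\<beta>\<in>R2. \<alpha> \<bullet> \<beta> = 0))"

definition positive_system :: "'a::euclidean_space set \<Rightarrow> 'a set \<Rightarrow> bool" where
  "positive_system R Rp \<longleftrightarrow>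
     (\<exists>v. (\<forall>\<alpha>\<in>R. v \<bullet> \<alpha> \<noteq> 0) \<and> Rp = {\<alpha>\<in>R. v \<bullet> \<alpha> > 0})"

inductive_set weyl_group :: "'a::euclidean_space set \<Rightarrow> ('a \<Rightarrow> 'a) set" for R where
  weyl_id: "id \<in> weyl_group R"
| weyl_refl: "\<alpha> \<in> R \<Longrightarrow> w \<in> weyl_group R \<Longrightarrow> reflection \<alpha> \<circ> w \<in> weyl_group R"

definition integral_weights :: "'a::euclidean_space set \<Rightarrow> 'a set" where
  "integral_weights R = {lam. \<forall>\<alpha>\<in>R. coroot_eval lam \<alpha> \<in> \<int>}"

definition dominant_weights :: "'a::euclidean_space set \<Rightarrow> 'a set \<Rightarrow> 'a set" where
  "dominant_weights R Rp = {lam \<in> integral_weights R. \<forall>\<alpha>\<in>Rp. coroot_eval lam \<alpha> \<ge> 0}"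

definition dominant_pairs :: "'a::euclidean_space set \<Rightarrow> 'a set \<Rightarrow> 'a \<Rightarrow> ('a \<times> 'a) set" where
  "dominant_pairs R Rp lam =
     {(l1, l2). l1 \<in> dominant_weights R Rp \<and> l2 \<in> dominant_weights R Rp \<and> l1 + l2 = lam}"

definition pair_preceq :: "'a::euclidean_space set \<Rightarrow> 'a \<times> 'a \<Rightarrow> 'a \<times> 'a \<Rightarrow> bool" where
  "pair_preceq Rp l m \<longleftrightarrow>
     (\<forall>\<alpha>\<in>Rp. min (coroot_eval (fst l) \<alpha>) (coroot_eval (snd l) \<alpha>)
              \<le> min (coroot_eval (fst m) \<alpha>) (coroot_eval (snd m) \<alpha>))"

end

theory Submission
  imports Defs
begin

(* Write a = lambda_1 - mu_1 and b = mu_1 - lambda_2.  Since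
   lambda_1 + lambda_2 = mu_1 + mu_2, for every root alpha the numbers
   lambda_i(h_alpha), mu_i(h_alpha) form two pairs with equal sum, and for such pairs
   min(p,q) <= min(r,s) holds iff (p - r)(r - q) >= 0; this gives (a) <=> (b).
   The product a(h_alpha) b(h_alpha) is even in alpha and R = R+ u -R+, giving
   (b) <=> (c).  For the Weyl criterion we use that Weyl group elements are linear
   isometries permuting R, so w x is dominant iff x(h_g) >= 0 for all roots g with
   w g positive.  If w(a + b) is dominant, then on such g the sum a + b is >= 0, and
   a nonnegative product with nonnegative sum forces both factors >= 0; conversely
   dominance of w a, w b gives equal signs of a(h_g), b(h_g) on every root g. *)

lemma coroot_eval_add: "coroot_eval (x + y) \<alpha> = coroot_eval x \<alpha> + coroot_eval y \<alpha>"
  unfolding coroot_eval_def by (simp add: inner_add_left add_divide_distrib algebra_simps)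

lemma coroot_eval_diff: "coroot_eval (x - y) \<alpha> = coroot_eval x \<alpha> - coroot_eval y \<alpha>"
  unfolding coroot_eval_def by (simp add: inner_diff_left diff_divide_distrib algebra_simps)

lemma coroot_eval_uminus_root: "coroot_eval v (- \<alpha>) = - coroot_eval v \<alpha>"
  unfolding coroot_eval_def by simp

lemma integral_weights_add:
  "x \<in> integral_weights R \<Longrightarrow> y \<in> integral_weights R \<Longrightarrow> x + y \<in> integral_weights R"
  unfolding integral_weights_def by (simp add: coroot_eval_add)

lemma integral_weights_diff:
  "x \<in> integral_weights R \<Longrightarrow> y \<in> integral_weights R \<Longrightarrow> x - y \<in> integral_weights R"
  unfolding integral_weights_def by (simp add: coroot_eval_diff)

text \<open>A root system is symmetric: the reflection of a root in itself is its negative.\<close>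
lemma root_system_uminus:
  assumes "root_system R" and "\<alpha> \<in> R"
  shows "- \<alpha> \<in> R"
proof -
  have "\<alpha> \<noteq> 0" using assms unfolding root_system_def by auto
  then have "reflection \<alpha> \<alpha> = - \<alpha>"
    unfolding reflection_def coroot_eval_def by (simp add: algebra_simps scaleR_2)
  moreover have "reflection \<alpha> \<alpha> \<in> R" using assms unfolding root_system_def by auto
  ultimately show ?thesis by simp
qed

lemma positive_system_subset: "positive_system R Rp \<Longrightarrow> Rp \<subseteq> R"
  unfolding positive_system_def by auto

lemma positive_system_cases:
  assumes "root_system R" and "positive_system R Rp" and "\<alpha> \<in> R"
  shows "\<alpha> \<in> Rp \<or> - \<alpha> \<in> Rp"
proof -
  obtain v where v: "\<forall>\<beta>\<in>R. v \<bullet> \<beta> \<noteq> 0" and Rp: "Rp = {\<beta>\<in>R. v \<bullet> \<beta> > 0}"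
    using assms(2) unfolding positive_system_def by auto
  have "v \<bullet> \<alpha> \<noteq> 0" using v assms(3) by auto
  then show ?thesis using assms(3) root_system_uminus[OF assms(1,3)] Rp by auto
qed

lemma positive_roots_suffice:
  assumes "root_system R" and "positive_system R Rp" and even: "\<And>\<alpha>. P (- \<alpha>) = P \<alpha>"
  shows "(\<forall>\<alpha>\<in>Rp. P \<alpha>) \<longleftrightarrow> (\<forall>\<alpha>\<in>R. P \<alpha>)"
  using positive_system_cases[OF assms(1,2)] positive_system_subset[OF assms(2)] even
  by (metis subsetD)

lemma reflection_inner:
  assumes "\<alpha> \<bullet> \<alpha> \<noteq> 0"
  shows "reflection \<alpha> u \<bullet> reflection \<alpha> v = u \<bullet> v"
  using assms unfolding reflection_def coroot_eval_def
  by (simp add: inner_diff_left inner_diff_right field_simps inner_commute)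

lemma linear_reflection: "linear (reflection \<alpha>)"
  by (rule linearI)
     (simp_all add: reflection_def coroot_eval_def inner_add_left add_divide_distrib
        distrib_left scaleR_add_left scaleR_diff_right algebra_simps)

lemma weyl_group_props:
  assumes "root_system R" and "w \<in> weyl_group R"
  shows "linear w \<and> (\<forall>x y. w x \<bullet> w y = x \<bullet> y) \<and> (\<forall>\<beta>\<in>R. w \<beta> \<in> R)"
  using assms(2)
proof induction
  case weyl_id
  then show ?case using linear_id by (simp add: id_def)
next
  case (weyl_refl \<alpha> w)
  have "\<alpha> \<bullet> \<alpha> \<noteq> 0" using assms(1) weyl_refl(1) unfolding root_system_def by auto
  then have "\<forall>x y. (reflection \<alpha> \<circ> w) x \<bullet> (reflection \<alpha> \<circ> w) y = x \<bullet> y"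
    using weyl_refl(3) by (simp add: reflection_inner)
  moreover have "linear (reflection \<alpha> \<circ> w)"
    using weyl_refl(3) linear_compose linear_reflection by blast
  moreover have "\<forall>\<beta>\<in>R. (reflection \<alpha> \<circ> w) \<beta> \<in> R"
    using weyl_refl assms(1) unfolding root_system_def by auto
  ultimately show ?case by blast
qed

lemma coroot_eval_weyl:
  assumes "root_system R" and "w \<in> weyl_group R"
  shows "coroot_eval (w x) (w \<alpha>) = coroot_eval x \<alpha>"
  using weyl_group_props[OF assms] unfolding coroot_eval_def by simp

text \<open>An isometry is injective, so it permutes the finite set R.\<close>
lemma weyl_group_image:
  assumes "root_system R" and "w \<in> weyl_group R"
  shows "w ` R = R"
proof -
  from weyl_group_props[OF assms]
  have ip: "\<And>x y. w x \<bullet> w y = x \<bullet> y" and sub: "w ` R \<subseteq> R" by auto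
  have "inj w"
  proof (rule injI)
    fix x y assume "w x = w y"
    then have "(w x - w y) \<bullet> (w x - w y) = 0" by simp
    then have "(x - y) \<bullet> (x - y) = 0" by (simp add: inner_diff_left inner_diff_right ip)
    then show "x = y" by simp
  qed
  moreover have "finite R" using assms(1) unfolding root_system_def by auto
  moreover have "card (w ` R) = card R" using \<open>inj w\<close> by (simp add: card_image inj_on_subset)
  ultimately show ?thesis using sub by (simp add: card_subset_eq)
qed

lemma dominant_weights_weyl_iff:
  assumes "root_system R" and "positive_system R Rp" and "w \<in> weyl_group R"
    and "x \<in> integral_weights R"
  shows "w x \<in> dominant_weights R Rp \<longleftrightarrow> (\<forall>\<gamma>\<in>R. w \<gamma> \<in> Rp \<longrightarrow> coroot_eval x \<gamma> \<ge> 0)"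
proof -
  have image: "w ` R = R" by (rule weyl_group_image[OF assms(1,3)])
  have pull: "(\<forall>\<beta>\<in>R. Q \<beta>) \<longleftrightarrow> (\<forall>\<gamma>\<in>R. Q (w \<gamma>))" for Q
    by (metis image imageI image_iff)
  have "w x \<in> integral_weights R"
    using assms(4) pull[of "\<lambda>\<beta>. coroot_eval (w x) \<beta> \<in> \<int>"]
    unfolding integral_weights_def coroot_eval_weyl[OF assms(1,3)] by simp
  moreover have "(\<forall>\<beta>\<in>Rp. coroot_eval (w x) \<beta> \<ge> 0) \<longleftrightarrow>
                 (\<forall>\<gamma>\<in>R. w \<gamma> \<in> Rp \<longrightarrow> coroot_eval x \<gamma> \<ge> 0)"
    using pull[of "\<lambda>\<beta>. \<beta> \<in> Rp \<longrightarrow> coroot_eval (w x) \<beta> \<ge> 0"] positive_system_subset[OF assms(2)]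
    by (auto simp: coroot_eval_weyl[OF assms(1,3)])
  ultimately show ?thesis unfolding dominant_weights_def by blast
qed

lemma min_le_min_iff:
  fixes p q r s :: real
  assumes "p + q = r + s"
  shows "min p q \<le> min r s \<longleftrightarrow> 0 \<le> (p - r) * (r - q)"
  using assms by (auto simp: zero_le_mult_iff min_def)

lemma pair_preceq_iff_sign:
  assumes "l1 + l2 = m1 + m2"
  shows "pair_preceq Rp (l1, l2) (m1, m2) \<longleftrightarrow>
           (\<forall>\<alpha>\<in>Rp. coroot_eval (l1 - m1) \<alpha> * coroot_eval (m1 - l2) \<alpha> \<ge> 0)"
proof -
  have "coroot_eval l1 \<alpha> + coroot_eval l2 \<alpha> = coroot_eval m1 \<alpha> + coroot_eval m2 \<alpha>" for \<alpha>
    using arg_cong[OF assms, of "\<lambda>v. coroot_eval v \<alpha>"] by (simp only: coroot_eval_add)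
  then have per_root: "min (coroot_eval l1 \<alpha>) (coroot_eval l2 \<alpha>)
      \<le> min (coroot_eval m1 \<alpha>) (coroot_eval m2 \<alpha>) \<longleftrightarrow>
      0 \<le> (coroot_eval l1 \<alpha> - coroot_eval m1 \<alpha>) * (coroot_eval m1 \<alpha> - coroot_eval l2 \<alpha>)" for \<alpha>
    by (rule min_le_min_iff)
  show ?thesis
    unfolding pair_preceq_def fst_conv snd_conv coroot_eval_diff per_root ..
qed

text \<open>Equivalence (b) \<Longleftrightarrow> (c): the product is even in the root.\<close>
lemma sign_condition_all_roots:
  assumes "root_system R" and "positive_system R Rp"
  shows "(\<forall>\<alpha>\<in>Rp. coroot_eval x \<alpha> * coroot_eval y \<alpha> \<ge> 0) \<longleftrightarrow>
         (\<forall>\<alpha>\<in>R. coroot_eval x \<alpha> * coroot_eval y \<alpha> \<ge> 0)"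
  by (rule positive_roots_suffice[OF assms]) (simp add: coroot_eval_uminus_root)

lemma sign_condition_weyl_iff:
  assumes rs: "root_system R" and ps: "positive_system R Rp" and w: "w \<in> weyl_group R"
    and x: "x \<in> integral_weights R" and y: "y \<in> integral_weights R"
    and dom: "w (x + y) \<in> dominant_weights R Rp"
  shows "(\<forall>\<alpha>\<in>R. coroot_eval x \<alpha> * coroot_eval y \<alpha> \<ge> 0) \<longleftrightarrow>
         w x \<in> dominant_weights R Rp \<and> w y \<in> dominant_weights R Rp"
proof -
  have xy: "x + y \<in> integral_weights R" using integral_weights_add[OF x y] .
  have sum_nonneg: "coroot_eval x \<gamma> + coroot_eval y \<gamma> \<ge> 0" if "\<gamma> \<in> R" "w \<gamma> \<in> Rp" for \<gamma>
    using dom that unfolding dominant_weights_weyl_iff[OF rs ps w xy] coroot_eval_add by blast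
  have w_uminus: "w (- \<gamma>) = - w \<gamma>" for \<gamma>
    using weyl_group_props[OF rs w] by (simp add: linear_neg)
  have root_cases: "w \<gamma> \<in> Rp \<or> w (- \<gamma>) \<in> Rp" if "\<gamma> \<in> R" for \<gamma>
    using positive_system_cases[OF rs ps] weyl_group_props[OF rs w] that w_uminus by auto
  show ?thesis
    unfolding dominant_weights_weyl_iff[OF rs ps w x] dominant_weights_weyl_iff[OF rs ps w y]
  proof
    assume sign: "\<forall>\<alpha>\<in>R. coroot_eval x \<alpha> * coroot_eval y \<alpha> \<ge> 0"
    have "coroot_eval x \<gamma> \<ge> 0 \<and> coroot_eval y \<gamma> \<ge> 0" if "\<gamma> \<in> R" "w \<gamma> \<in> Rp" for \<gamma>
    proof -
      have "coroot_eval x \<gamma> * coroot_eval y \<gamma> \<ge> 0" using sign that(1) by blast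
      moreover have "coroot_eval x \<gamma> + coroot_eval y \<gamma> \<ge> 0" using sum_nonneg[OF that] .
      ultimately show ?thesis by (auto simp: zero_le_mult_iff)
    qed
    then show "(\<forall>\<gamma>\<in>R. w \<gamma> \<in> Rp \<longrightarrow> coroot_eval x \<gamma> \<ge> 0) \<and>
               (\<forall>\<gamma>\<in>R. w \<gamma> \<in> Rp \<longrightarrow> coroot_eval y \<gamma> \<ge> 0)" by blast
  next
    assume "(\<forall>\<gamma>\<in>R. w \<gamma> \<in> Rp \<longrightarrow> coroot_eval x \<gamma> \<ge> 0) \<and>
            (\<forall>\<gamma>\<in>R. w \<gamma> \<in> Rp \<longrightarrow> coroot_eval y \<gamma> \<ge> 0)"
    then have pos: "\<And>\<gamma>. \<gamma> \<in> R \<Longrightarrow> w \<gamma> \<in> Rp \<Longrightarrow> coroot_eval x \<gamma> \<ge> 0 \<and> coroot_eval y \<gamma> \<ge> 0"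
      by blast
    show "\<forall>\<gamma>\<in>R. coroot_eval x \<gamma> * coroot_eval y \<gamma> \<ge> 0"
    proof
      fix \<gamma> assume "\<gamma> \<in> R"
      then have "- \<gamma> \<in> R" by (rule root_system_uminus[OF rs])
      from root_cases[OF \<open>\<gamma> \<in> R\<close>] show "coroot_eval x \<gamma> * coroot_eval y \<gamma> \<ge> 0"
      proof
        assume "w \<gamma> \<in> Rp"
        then show ?thesis using pos[OF \<open>\<gamma> \<in> R\<close>] by simp
      next
        assume "w (- \<gamma>) \<in> Rp"
        then have "coroot_eval x (- \<gamma>) \<ge> 0 \<and> coroot_eval y (- \<gamma>) \<ge> 0"
          using pos[OF \<open>- \<gamma> \<in> R\<close>] by simp
        then show ?thesis by (simp add: coroot_eval_uminus_root mult_nonpos_nonpos)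
      qed
    qed
  qed
qed

theorem proposition5p1:
  fixes R Rp :: "'a::euclidean_space set" and lam l1 l2 m1 m2 :: 'a
  assumes "root_system R" and "irreducible_rs R" and "positive_system R Rp"
    and "lam \<in> dominant_weights R Rp"
    and "(l1, l2) \<in> dominant_pairs R Rp lam" and "(m1, m2) \<in> dominant_pairs R Rp lam"
  shows "(pair_preceq Rp (l1, l2) (m1, m2) \<longleftrightarrow>
            (\<forall>\<alpha>\<in>Rp. coroot_eval (l1 - m1) \<alpha> * coroot_eval (m1 - l2) \<alpha> \<ge> 0))
       \<and> (pair_preceq Rp (l1, l2) (m1, m2) \<longleftrightarrow>
            (\<forall>\<alpha>\<in>R. coroot_eval (l1 - m1) \<alpha> * coroot_eval (m1 - l2) \<alpha> \<ge> 0))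
       \<and> (\<forall>w\<in>weyl_group R. w (l1 - l2) \<in> dominant_weights R Rp \<longrightarrow>
            (pair_preceq Rp (l1, l2) (m1, m2) \<longleftrightarrow>
               w (l1 - m1) \<in> dominant_weights R Rp \<and> w (m1 - l2) \<in> dominant_weights R Rp))"
proof -
  have sum: "l1 + l2 = m1 + m2" and integral: "l1 \<in> integral_weights R"
    "l2 \<in> integral_weights R" "m1 \<in> integral_weights R"
    using assms(5,6) unfolding dominant_pairs_def dominant_weights_def by auto
  note a_b = pair_preceq_iff_sign[OF sum, of Rp]
  note b_c = sign_condition_all_roots[OF assms(1,3), of "l1 - m1" "m1 - l2"]
  have "(l1 - m1) + (m1 - l2) = l1 - l2" by simp
  then have weyl: "(\<forall>\<alpha>\<in>R. coroot_eval (l1 - m1) \<alpha> * coroot_eval (m1 - l2) \<alpha> \<ge> 0) \<longleftrightarrow>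
      w (l1 - m1) \<in> dominant_weights R Rp \<and> w (m1 - l2) \<in> dominant_weights R Rp"
    if "w \<in> weyl_group R" "w (l1 - l2) \<in> dominant_weights R Rp" for w
    using sign_condition_weyl_iff[OF assms(1,3) that(1)
        integral_weights_diff[OF integral(1,3)] integral_weights_diff[OF integral(3,2)]] that(2)
    by simp
  show ?thesis using a_b b_c weyl by blast
qed

end
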